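(* Let $F$ be an algebraically closed field of positive characteristic $p$, and let $\phi \in F(z)$ be a rational function with a single critical point $c \in \mathbb{P}^1(F)$. Then there exist polynomials $q_0, \ldots, q_n \in F[z]$ and a nonzero element $a \in F$ such that $\phi \circ \sigma(z) = [q_0(z^p), q_1(z^p), \ldots, q_n(z^p) + az]$, where $\sigma(z) = z$ if $c = \infty$ and $\sigma(z) = c + 1/z$ otherwise.
   Context: Continued fraction expansion: for $\psi \in F(z)$, repeated division gives unique polynomials $f_0, \ldots, f_n \in F[z]$, with $f_1, \ldots, f_n$ nonconstant, such that $\psi = f_0 + \cfrac{1}{f_1 + \cfrac{1}{\ddots + \cfrac{1}{f_n}}}$, written $\psi = [f_0, \ldots, f_n]$. Critical points: for $x \in F$, choose a fractional linear transformation $\tau$ over $F$ with $\tau(\phi(x)) \neq \infty$; $x$ is a critical point if $\frac{d(\tau\circ\phi)}{dz}(x) = 0$. The point $\infty$ is a critical point if $\frac{d(\tau \circ \phi(1/z))}{dz}\big|_{z=0} = 0$ for such $\tau$ with $\tau(\phi(\infty))\neq\infty$. These notions are independent of $\tau$. *)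

theory Defs
  imports "HOL-Computational_Algebra.Polynomial" "HOL-Computational_Algebra.Fraction_Field"
begin

text \<open>Rational functions F(z) are modelled as the fraction field of F[z]; points of
  the projective line P^1(F) as 'a option, with None the point at infinity.\<close>

type_synonym 'a ratfun = "'a poly fract"

definition rf_of_poly :: "'a::field poly \<Rightarrow> 'a ratfun" where
  "rf_of_poly f = Fract f 1"

definition rf_X :: "'a::field ratfun" where
  "rf_X = rf_of_poly [:0, 1:]"

definition rf_const :: "'a::field \<Rightarrow> 'a ratfun" where
  "rf_const c = rf_of_poly [:c:]"

definition rf_rep :: "'a::field ratfun \<Rightarrow> 'a poly \<times> 'a poly" where
  "rf_rep \<phi> = (SOME (P, Q). Q \<noteq> 0 \<and> coprime P Q \<and> \<phi> = Fract P Q)"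

definition rf_val :: "'a::field ratfun \<Rightarrow> 'a \<Rightarrow> 'a option" where
  "rf_val \<phi> x = (case rf_rep \<phi> of (P, Q) \<Rightarrow>
      if poly Q x = 0 then None else Some (poly P x / poly Q x))"

definition poly_at_rf :: "'a::field poly \<Rightarrow> 'a ratfun \<Rightarrow> 'a ratfun" where
  "poly_at_rf P s = poly (map_poly rf_const P) s"

definition rf_comp :: "'a::field ratfun \<Rightarrow> 'a ratfun \<Rightarrow> 'a ratfun" where
  "rf_comp \<phi> s = (case rf_rep \<phi> of (P, Q) \<Rightarrow> poly_at_rf P s / poly_at_rf Q s)"

fun rf_valP :: "'a::field ratfun \<Rightarrow> 'a option \<Rightarrow> 'a option" where
  "rf_valP \<phi> (Some x) = rf_val \<phi> x"
| "rf_valP \<phi> None = rf_val (rf_comp \<phi> (inverse rf_X)) 0"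

definition rf_deriv :: "'a::field ratfun \<Rightarrow> 'a ratfun" where
  "rf_deriv \<phi> = (case rf_rep \<phi> of (P, Q) \<Rightarrow>
      Fract (pderiv P * Q - P * pderiv Q) (Q ^ 2))"

definition flt :: "'a::field \<times> 'a \<times> 'a \<times> 'a \<Rightarrow> bool" where
  "flt t = (case t of (a, b, c, d) \<Rightarrow> a * d - b * c \<noteq> 0)"

fun flt_apply :: "'a::field \<times> 'a \<times> 'a \<times> 'a \<Rightarrow> 'a option \<Rightarrow> 'a option" where
  "flt_apply (a, b, c, d) (Some w) =
     (if c * w + d = 0 then None else Some ((a * w + b) / (c * w + d)))"
| "flt_apply (a, b, c, d) None = (if c = 0 then None else Some (a / c))"

fun flt_comp :: "'a::field \<times> 'a \<times> 'a \<times> 'a \<Rightarrow> 'a ratfun \<Rightarrow> 'a ratfun" where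
  "flt_comp (a, b, c, d) \<psi> =
     (rf_const a * \<psi> + rf_const b) / (rf_const c * \<psi> + rf_const d)"

fun critical_point :: "'a::field ratfun \<Rightarrow> 'a option \<Rightarrow> bool" where
  "critical_point \<phi> (Some x) =
     (\<exists>t. flt t \<and> flt_apply t (rf_val \<phi> x) \<noteq> None \<and>
          rf_val (rf_deriv (flt_comp t \<phi>)) x = Some 0)"
| "critical_point \<phi> None =
     (\<exists>t. flt t \<and> flt_apply t (rf_valP \<phi> None) \<noteq> None \<and>
          rf_val (rf_deriv (flt_comp t (rf_comp \<phi> (inverse rf_X)))) 0 = Some 0)"

text \<open>Continued fraction [f0, ..., fn] = f0 + 1/(f1 + 1/(... + 1/fn)).\<close>
fun contfrac :: "'a::field poly list \<Rightarrow> 'a ratfun" where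
  "contfrac [] = 0"
| "contfrac [f] = rf_of_poly f"
| "contfrac (f # g # fs) = rf_of_poly f + inverse (contfrac (g # fs))"

definition cf_expansion :: "'a::field poly list \<Rightarrow> bool" where
  "cf_expansion fs = (fs \<noteq> [] \<and> (\<forall>i \<in> {1..<length fs}. degree (fs ! i) > 0))"

end

theory Submission
  imports Defs
begin

text \<open>A finite root of the Wronskian \<open>W(A, B) = A' B - A B'\<close> of a reduced quotient \<open>A/B\<close>
  is a critical point of \<open>A/B\<close>. The substitution \<open>\<sigma>\<close> moves the unique critical point to \<open>\<infinity>\<close>,
  so for \<open>\<phi> \<circ> \<sigma> = A/B\<close> the Wronskian has no roots and, \<open>F\<close> being algebraically closed, is
  a nonzero constant. Now run Euclid's algorithm: if \<open>A = f B + r\<close> then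
  \<open>W(A, B) = f' B\<^sup>2 + W(r, B)\<close> with \<open>deg W(r, B) < 2 deg B\<close>, so \<open>f' = 0\<close>, i.e. \<open>f = q(z\<^sup>p)\<close>,
  and \<open>W(B, r) = -W(A, B)\<close> is the same constant up to sign. When the denominator becomes
  constant, the numerator has constant nonzero derivative \<open>a\<close> and is therefore \<open>q(z\<^sup>p) + a z\<close>.\<close>

definition wronskian :: "'a::field poly \<Rightarrow> 'a poly \<Rightarrow> 'a poly" where
  "wronskian P Q = pderiv P * Q - P * pderiv Q"

lemma wronskian_swap: "wronskian B A = - wronskian A B"
  by (simp add: wronskian_def algebra_simps)

lemma rf_rep_exists: "\<exists>P Q. Q \<noteq> 0 \<and> coprime P Q \<and> (\<phi>::'a::field ratfun) = Fract P Q"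
proof -
  define S where "S = {n. \<exists>P Q. Q \<noteq> 0 \<and> \<phi> = Fract P Q \<and> degree Q = n}"
  obtain a b where "\<phi> = Fract a b" "b \<noteq> 0" by (cases \<phi>)
  then have "degree b \<in> S" unfolding S_def by blast
  define n where "n = (LEAST n. n \<in> S)"
  have "n \<in> S" unfolding n_def by (rule LeastI) fact
  then obtain P Q where PQ: "Q \<noteq> 0" "\<phi> = Fract P Q" "degree Q = n" unfolding S_def by blast
  have "coprime P Q"
  proof (rule coprimeI)
    fix c assume "c dvd P" "c dvd Q"
    then obtain P' Q' where e: "P = c * P'" "Q = c * Q'" by (meson dvdE)
    have c0: "c \<noteq> 0" and Q'0: "Q' \<noteq> 0" using PQ(1) e(2) by auto
    show "is_unit c"
    proof (rule ccontr)
      assume "\<not> is_unit c"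
      then have "degree c > 0" using c0 is_unit_iff_degree by blast
      then have "degree Q' < degree Q" using e(2) c0 Q'0 by (simp add: degree_mult_eq)
      moreover have "\<phi> = Fract P' Q'" using PQ(2) e c0 by (simp add: mult_fract_cancel)
      then have "degree Q' \<in> S" unfolding S_def using Q'0 by blast
      ultimately show False using Least_le[of "\<lambda>n. n \<in> S"] PQ(3) n_def by fastforce
    qed
  qed
  then show ?thesis using PQ by blast
qed

lemma rf_repE:
  obtains P Q where "rf_rep \<phi> = (P, Q)" "Q \<noteq> 0" "coprime P Q" "\<phi> = Fract P Q"
proof -
  let ?R = "\<lambda>(P, Q). Q \<noteq> 0 \<and> coprime P Q \<and> \<phi> = Fract P Q"
  from rf_rep_exists[of \<phi>] have "\<exists>PQ. ?R PQ" by auto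
  then have "?R (rf_rep \<phi>)" unfolding rf_rep_def by (rule someI_ex)
  then show ?thesis using that by (cases "rf_rep \<phi>") auto
qed

lemma coprime_imp_no_common_root:
  assumes "coprime P Q" shows "\<not> (poly P y = 0 \<and> poly Q (y::'a::field) = 0)"
proof
  assume "poly P y = 0 \<and> poly Q y = 0"
  then have "[:-y,1:] dvd P" "[:-y,1:] dvd Q" by (simp_all add: poly_eq_0_iff_dvd)
  then have "is_unit [:-y,1:]" using assms coprime_common_divisor by blast
  then show False by (simp add: is_unit_iff_degree)
qed

lemma rf_val_Fract:
  assumes "B \<noteq> 0" "poly B y \<noteq> 0"
  shows "rf_val (Fract A B) y = Some (poly A y / poly B y)"
proof -
  obtain P Q where r: "rf_rep (Fract A B) = (P, Q)" "Q \<noteq> 0" "coprime P Q" "Fract A B = Fract P Q"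
    by (rule rf_repE)
  have "A * Q = P * B" using r assms by (simp add: eq_fract)
  then have e: "poly A y * poly Q y = poly P y * poly B y" by (metis poly_mult)
  then have "poly Q y \<noteq> 0" using assms coprime_imp_no_common_root[OF r(3)] by auto
  then show ?thesis using r e assms unfolding rf_val_def by (simp add: field_simps)
qed

lemma rf_val_Fract_pole:
  assumes "B \<noteq> 0" "poly B y = 0" "poly A y \<noteq> 0"
  shows "rf_val (Fract A B) y = None"
proof -
  obtain P Q where r: "rf_rep (Fract A B) = (P, Q)" "Q \<noteq> 0" "Fract A B = Fract P Q"
    by (rule rf_repE)
  have "A * Q = P * B" using r assms by (simp add: eq_fract)
  then have "poly A y * poly Q y = poly P y * poly B y" by (metis poly_mult)
  then show ?thesis using r assms unfolding rf_val_def by simp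
qed

lemma rf_deriv_Fract:
  assumes "Q \<noteq> 0"
  shows "rf_deriv (Fract P Q) = Fract (wronskian P Q) (Q ^ 2)"
proof -
  obtain P0 Q0 where r: "rf_rep (Fract P Q) = (P0, Q0)" "Q0 \<noteq> 0" "Fract P Q = Fract P0 Q0"
    by (rule rf_repE)
  have h: "P * Q0 = P0 * Q" using r assms by (simp add: eq_fract)
  have h': "pderiv P * Q0 + P * pderiv Q0 = pderiv P0 * Q + P0 * pderiv Q"
    using arg_cong[OF h, of pderiv] by (simp add: pderiv_mult algebra_simps)
  have "wronskian P0 Q0 * Q^2 = wronskian P Q * Q0^2"
    unfolding wronskian_def power2_eq_square using h h' by algebra
  then have "Fract (wronskian P0 Q0) (Q0^2) = Fract (wronskian P Q) (Q^2)"
    using r(2) assms by (simp add: eq_fract)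
  then show ?thesis unfolding rf_deriv_def r(1) wronskian_def by simp
qed

lemma rf_const_0 [simp]: "rf_const 0 = 0" and rf_const_1 [simp]: "rf_const 1 = 1"
  by (simp_all add: rf_const_def rf_of_poly_def One_fract_def Zero_fract_def pCons_one)

lemma rf_const_add: "rf_const (a + b) = rf_const a + rf_const (b::'a::field)"
  by (simp add: rf_const_def rf_of_poly_def)

lemma rf_const_mult: "rf_const (a * b) = rf_const a * rf_const (b::'a::field)"
  by (simp add: rf_const_def rf_of_poly_def ac_simps)

section \<open>Critical points and the Wronskian\<close>

text \<open>Away from poles the identity works as \<open>\<tau>\<close>; at a pole \<open>\<tau>(w) = 1/w\<close> swaps numerator
  and denominator, which only changes the sign of the Wronskian.\<close>

lemma critical_point_Fract_if_wronskian_root: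
  assumes "B \<noteq> 0" "\<not> (poly A y = 0 \<and> poly B y = 0)" "poly (wronskian A B) y = 0"
  shows "critical_point (Fract A B) (Some y)"
proof (cases "poly B y = 0")
  case False
  show ?thesis unfolding critical_point.simps
  proof (intro exI conjI)
    show "flt (1, 0, 0, 1)" by (simp add: flt_def)
    show "flt_apply (1, 0, 0, 1) (rf_val (Fract A B) y) \<noteq> None"
      using assms(1) False by (simp add: rf_val_Fract)
    show "rf_val (rf_deriv (flt_comp (1, 0, 0, 1) (Fract A B))) y = Some 0"
      using assms False by (simp add: rf_deriv_Fract rf_val_Fract)
  qed
next
  case True
  have "A \<noteq> 0" "poly (wronskian B A) y = 0" using assms True wronskian_swap[of B A] by auto
  show ?thesis unfolding critical_point.simps
  proof (intro exI conjI)
    show "flt (0, 1, 1, 0)" by (simp add: flt_def)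
    show "flt_apply (0, 1, 1, 0) (rf_val (Fract A B) y) \<noteq> None"
      using assms True by (simp add: rf_val_Fract_pole)
    have "flt_comp (0, 1, 1, 0) (Fract A B) = Fract B A"
      by (simp add: divide_fract_def One_fract_def[symmetric])
    then show "rf_val (rf_deriv (flt_comp (0, 1, 1, 0) (Fract A B))) y = Some 0"
      using \<open>A \<noteq> 0\<close> \<open>poly (wronskian B A) y = 0\<close> True assms(2)
      by (simp add: rf_deriv_Fract rf_val_Fract)
  qed
qed

lemma critical_point_if_wronskian_root:
  assumes "rf_rep \<phi> = (P, Q)" "poly (wronskian P Q) y = 0"
  shows "critical_point \<phi> (Some y)"
proof -
  obtain P' Q' where r: "rf_rep \<phi> = (P', Q')" "Q' \<noteq> 0" "coprime P' Q'" "\<phi> = Fract P' Q'"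
    by (rule rf_repE)
  then have "P' = P" "Q' = Q" using assms(1) by simp_all
  then have "critical_point (Fract P' Q') (Some y)"
    using r(2,3) assms(2) coprime_imp_no_common_root
    by (intro critical_point_Fract_if_wronskian_root) auto
  then show ?thesis using r(4) by (simp only:)
qed

section \<open>Reversal of polynomials\<close>

definition reversal :: "nat \<Rightarrow> 'a::field poly \<Rightarrow> 'a poly" where
  "reversal d F = (\<Sum>i\<le>d. monom (coeff F i) (d - i))"

lemma coeff_reversal: "coeff (reversal d F) n = (if n \<le> d then coeff F (d - n) else 0)"
proof -
  have "coeff (reversal d F) n = (\<Sum>i\<le>d. if i = d - n \<and> n \<le> d then coeff F i else 0)"
    unfolding reversal_def coeff_sum coeff_monom by (rule sum.cong) auto
  then show ?thesis by (cases "n \<le> d") (simp_all add: sum.delta)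
qed

lemma reversal_nonzero:
  assumes "F \<noteq> 0" "degree F \<le> d"
  shows "reversal d F \<noteq> 0"
proof -
  have "coeff (reversal d F) (d - degree F) = lead_coeff F" using assms by (simp add: coeff_reversal)
  then show ?thesis using assms by auto
qed

lemma poly_as_sum_upto:
  fixes p :: "'a::comm_semiring_1 poly"
  assumes "degree p \<le> d"
  shows "poly p x = (\<Sum>i\<le>d. coeff p i * x ^ i)"
  unfolding poly_altdef using assms by (intro sum.mono_neutral_left) (auto simp: coeff_eq_0)

lemma poly_reversal:
  assumes "x \<noteq> 0" "degree F \<le> d"
  shows "poly (reversal d F) x = x ^ d * poly F (inverse x)"
proof -
  have "poly (reversal d F) x = (\<Sum>i\<le>d. x ^ d * (coeff F i * inverse x ^ i))"
    unfolding reversal_def poly_sum poly_monom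
    using assms(1) by (intro sum.cong) (auto simp: power_diff_conv_inverse)
  also have "\<dots> = x ^ d * poly F (inverse x)"
    by (simp add: sum_distrib_left poly_as_sum_upto[OF assms(2)])
  finally show ?thesis .
qed

lemma degree_pderiv_le: "degree (pderiv p) \<le> degree p"
  by (rule degree_le) (simp add: coeff_pderiv coeff_eq_0)

lemma degree_pCons_0_pderiv_le: "degree (pCons 0 (pderiv F)) \<le> degree F"
  by (rule degree_le) (auto simp: coeff_pderiv coeff_eq_0 coeff_pCons split: nat.split)

text \<open>Euler's identity \<open>z R' = d R - R(z F')\<close> for \<open>R = reversal d F\<close>.\<close>

lemma pderiv_reversal:
  assumes "degree F \<le> d"
  shows "pCons 0 (pderiv (reversal d F)) =
    smult (of_nat d) (reversal d F) - reversal d (pCons 0 (pderiv F))"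
proof (rule poly_eqI)
  fix n
  show "coeff (pCons 0 (pderiv (reversal d F))) n =
    coeff (smult (of_nat d) (reversal d F) - reversal d (pCons 0 (pderiv F))) n"
  proof (cases "n = 0 \<or> d < n")
    case True
    then show ?thesis using assms
      by (cases d) (auto simp: coeff_reversal coeff_pderiv coeff_pCons coeff_eq_0 split: nat.split)
  next
    case False
    then obtain m j where "n = Suc m" "d = Suc m + j" by (metis le_add_diff_inverse not0_implies_Suc not_le)
    then show ?thesis
      by (cases j) (simp_all add: coeff_reversal coeff_pderiv coeff_pCons algebra_simps)
  qed
qed

lemma wronskian_reversal_root:
  fixes x :: "'a::field"
  assumes "x \<noteq> 0" "degree F \<le> d" "degree G \<le> d"
    and "poly (wronskian (reversal d F) (reversal d G)) x = 0"
  shows "poly (wronskian F G) (inverse x) = 0"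
proof -
  let ?u = "inverse x"
  have e: "x * poly (pderiv (reversal d H)) x =
      of_nat d * (x ^ d * poly H ?u) - x ^ d * (?u * poly (pderiv H) ?u)"
    if "degree H \<le> d" for H
  proof -
    have "poly (pCons 0 (pderiv (reversal d H))) x =
        poly (smult (of_nat d) (reversal d H) - reversal d (pCons 0 (pderiv H))) x"
      by (simp only: pderiv_reversal[OF that])
    then show ?thesis
      using assms(1) that degree_pCons_0_pderiv_le[of H] order.trans by (simp add: poly_reversal)
  qed
  have "x * poly (wronskian (reversal d F) (reversal d G)) x =
      (x * poly (pderiv (reversal d F)) x) * poly (reversal d G) x
      - poly (reversal d F) x * (x * poly (pderiv (reversal d G)) x)"
    by (simp add: wronskian_def algebra_simps)
  also have "\<dots> = - (x ^ d * x ^ d * ?u) * poly (wronskian F G) ?u"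
    unfolding e[OF assms(2)] e[OF assms(3)] using assms
    by (simp add: poly_reversal wronskian_def algebra_simps)
  finally show ?thesis using assms(1,4) by simp
qed

lemma poly_wronskian_pcompose_shift:
  "poly (wronskian (pcompose P [:c, 1:]) (pcompose Q [:c, 1:])) u = poly (wronskian P Q) (c + u)"
  by (simp add: wronskian_def pderiv_pcompose poly_pcompose pderiv_pCons)

lemma poly_wronskian_reversal_0:
  "poly (wronskian (reversal (Suc m) F) (reversal (Suc m) G)) 0 =
    coeff F m * coeff G (Suc m) - coeff F (Suc m) * coeff G m"
  by (simp add: wronskian_def poly_0_coeff_0 coeff_mult_0 coeff_pderiv coeff_reversal)

lemma coeff_pcompose_shift:
  fixes F :: "'a::field poly"
  shows "degree F \<le> Suc m \<Longrightarrow> coeff (pcompose F [:c, 1:]) (Suc m) = coeff F (Suc m) \<and>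
     coeff (pcompose F [:c, 1:]) m = coeff F m + of_nat (Suc m) * c * coeff F (Suc m)"
proof (induction F arbitrary: m rule: pCons_induct)
  case (pCons a F)
  let ?G = "pcompose F [:c, 1:]"
  have cG: "coeff (pcompose (pCons a F) [:c, 1:]) n =
      (if n = 0 then a else 0) + c * coeff ?G n + (if n = 0 then 0 else coeff ?G (n - 1))" for n
    by (simp add: pcompose_pCons mult_pCons_left coeff_pCons split: nat.split)
  have dF: "degree F \<le> m" using pCons.prems pCons.hyps by (cases "F = 0") auto
  then have G0: "coeff ?G (Suc m) = 0" by (simp add: coeff_eq_0 degree_pcompose)
  show ?case
  proof (cases m)
    case 0
    then obtain f where "F = [:f:]" using dF by (metis degree_eq_zeroE le_zero_eq)
    then show ?thesis using 0 by (simp add: cG pcompose_pCons)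
  next
    case (Suc m')
    then show ?thesis using pCons.IH[of m'] dF G0 by (simp add: cG algebra_simps)
  qed
qed simp

lemma poly_wronskian_reversal_shift_0:
  assumes "degree P \<le> Suc m" "degree Q \<le> Suc m"
  shows "poly (wronskian (reversal (Suc m) (pcompose P [:c, 1:]))
                         (reversal (Suc m) (pcompose Q [:c, 1:]))) 0 =
         poly (wronskian (reversal (Suc m) P) (reversal (Suc m) Q)) 0"
  using coeff_pcompose_shift[OF assms(1), of c] coeff_pcompose_shift[OF assms(2), of c]
  by (simp add: poly_wronskian_reversal_0 algebra_simps)

section \<open>Composition with the substitutions \<open>\<sigma>\<close>\<close>

lemma poly_at_rf_0 [simp]: "poly_at_rf 0 s = 0"
  by (simp add: poly_at_rf_def)

lemma poly_at_rf_pCons: "poly_at_rf (pCons a F) s = rf_const a + s * poly_at_rf F s"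
  by (simp add: poly_at_rf_def map_poly_pCons)

lemma poly_at_rf_const: "poly_at_rf [:a:] s = rf_const a"
  by (simp add: poly_at_rf_def map_poly_pCons)

lemma poly_at_rf_add: "poly_at_rf (p + q) s = poly_at_rf p s + poly_at_rf q s"
proof -
  have "map_poly rf_const (p + q) = map_poly rf_const p + map_poly rf_const q"
    by (intro poly_eqI) (simp add: coeff_map_poly rf_const_add)
  then show ?thesis by (simp add: poly_at_rf_def)
qed

lemma poly_at_rf_smult: "poly_at_rf (smult a q) s = rf_const a * poly_at_rf q s"
  by (simp add: poly_at_rf_def map_poly_smult rf_const_mult)

lemma poly_at_rf_mult: "poly_at_rf (p * q) s = poly_at_rf p s * poly_at_rf q s"
proof (induction p rule: pCons_induct)
  case (pCons a p)
  have "poly_at_rf (pCons a p * q) s = poly_at_rf (smult a q + pCons 0 (p * q)) s" by simp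
  also have "\<dots> = rf_const a * poly_at_rf q s + s * poly_at_rf (p * q) s"
    by (simp add: poly_at_rf_add poly_at_rf_smult poly_at_rf_pCons)
  finally show ?case using pCons.IH by (simp add: poly_at_rf_pCons algebra_simps)
qed simp

lemma poly_at_rf_shift:
  "poly_at_rf F (rf_const c + s) = poly_at_rf (pcompose F [:c, 1:]) s"
proof (induction F rule: pCons_induct)
  case (pCons a F)
  have shift: "poly_at_rf [:c, 1:] s = rf_const c + s"
    by (simp add: poly_at_rf_pCons poly_at_rf_const)
  have "poly_at_rf (pcompose (pCons a F) [:c, 1:]) s =
      rf_const a + (rf_const c + s) * poly_at_rf (pcompose F [:c, 1:]) s"
    by (simp only: pcompose_pCons poly_at_rf_add poly_at_rf_mult poly_at_rf_const shift)
  then show ?case by (simp only: poly_at_rf_pCons pCons.IH)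
qed simp

lemma poly_at_rf_rf_X: "poly_at_rf F rf_X = Fract F 1"
proof (induction F rule: pCons_induct)
  case (pCons a F)
  have "pCons a F = [:a:] + [:0, 1:] * F" by (simp add: mult_pCons_left)
  then show ?case using pCons.IH
    by (simp add: poly_at_rf_pCons rf_X_def rf_of_poly_def rf_const_def)
qed (simp add: poly_at_rf_def Zero_fract_def)

lemma Fract_power: "Fract a b ^ n = Fract (a ^ n) (b ^ n)"
  by (induction n) (simp_all add: One_fract_def)

lemma sum_Fract:
  assumes "D \<noteq> 0"
  shows "(\<Sum>i\<in>A. Fract (f i) D) = Fract (\<Sum>i\<in>A. f i) D"
  using assms by (induction A rule: infinite_finite_induct) (simp_all add: fract_collapse eq_fract algebra_simps)

lemma poly_at_rf_inverse_rf_X: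
  assumes "degree G \<le> d"
  shows "poly_at_rf G (inverse rf_X) = Fract (reversal d G) (monom 1 d)"
proof -
  have deg: "degree (map_poly rf_const G) \<le> d"
    using assms map_poly_degree_leq order.trans by blast
  have monomial_term: "rf_const (coeff G i) * inverse rf_X ^ i = Fract (monom (coeff G i) (d - i)) (monom 1 d)"
    if "i \<le> d" for i
  proof -
    have "rf_const (coeff G i) * inverse rf_X ^ i = Fract [:coeff G i:] (monom 1 i)"
      by (simp add: rf_const_def rf_of_poly_def rf_X_def Fract_power monom_altdef)
    also have "\<dots> = Fract (monom (coeff G i) (d - i)) (monom 1 d)"
      using that by (simp add: eq_fract mult_monom monom_altdef power_add[symmetric])
    finally show ?thesis .
  qed
  have "poly_at_rf G (inverse rf_X) = (\<Sum>i\<le>d. rf_const (coeff G i) * inverse rf_X ^ i)"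
    unfolding poly_at_rf_def by (simp add: poly_as_sum_upto[OF deg] coeff_map_poly)
  also have "\<dots> = Fract (reversal d G) (monom 1 d)"
    using monomial_term by (simp add: sum_Fract reversal_def)
  finally show ?thesis .
qed

lemma rf_comp_rf_X: "rf_comp \<phi> rf_X = \<phi>"
proof -
  obtain P Q where "rf_rep \<phi> = (P, Q)" "Q \<noteq> 0" "\<phi> = Fract P Q" by (rule rf_repE)
  then show ?thesis unfolding rf_comp_def by (simp add: poly_at_rf_rf_X)
qed

lemma rf_comp_shift_inverse:
  assumes "rf_rep \<phi> = (P, Q)" "degree P \<le> d" "degree Q \<le> d"
  shows "rf_comp \<phi> (rf_const c + inverse rf_X) =
           Fract (reversal d (pcompose P [:c, 1:])) (reversal d (pcompose Q [:c, 1:]))"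
proof -
  have "degree (pcompose P [:c, 1:]) \<le> d" "degree (pcompose Q [:c, 1:]) \<le> d"
    using assms by (simp_all add: degree_pcompose)
  then have "rf_comp \<phi> (rf_const c + inverse rf_X) =
      Fract (reversal d (pcompose P [:c, 1:])) (monom 1 d) /
      Fract (reversal d (pcompose Q [:c, 1:])) (monom 1 d)"
    unfolding rf_comp_def assms(1) by (simp add: poly_at_rf_shift poly_at_rf_inverse_rf_X)
  also have "\<dots> = Fract (monom 1 d * reversal d (pcompose P [:c, 1:]))
                         (monom 1 d * reversal d (pcompose Q [:c, 1:]))"
    by (simp add: ac_simps)
  finally show ?thesis by (simp add: mult_fract_cancel)
qed

lemma critical_point_infinity_if_wronskian_reversal_root:
  assumes "rf_rep \<phi> = (P, Q)" "d = max (degree P) (degree Q)" "d \<noteq> 0"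
    and "poly (wronskian (reversal d P) (reversal d Q)) 0 = 0"
  shows "critical_point \<phi> None"
proof -
  obtain P' Q' where r: "rf_rep \<phi> = (P', Q')" "Q' \<noteq> 0" by (rule rf_repE)
  then have PQ: "P' = P" "Q' = Q" using assms(1) by auto
  have dP: "degree P \<le> d" and dQ: "degree Q \<le> d" using assms(2) by simp_all
  have "rf_comp \<phi> (inverse rf_X) = Fract (reversal d P) (reversal d Q)"
    using rf_comp_shift_inverse[OF assms(1) dP dQ, of 0] by simp
  moreover have "reversal d Q \<noteq> 0" using reversal_nonzero r(2) dQ PQ by blast
  moreover have "\<not> (poly (reversal d P) 0 = 0 \<and> poly (reversal d Q) 0 = 0)"
    using assms(2,3) r(2) PQ by (auto simp: poly_0_coeff_0 coeff_reversal max_def)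
  ultimately have "critical_point (rf_comp \<phi> (inverse rf_X)) (Some 0)"
    using critical_point_Fract_if_wronskian_root[of "reversal d Q" "reversal d P" 0] assms(4) by simp
  then show ?thesis by simp
qed

text \<open>For a finite critical point \<open>c\<close>, \<open>\<phi>(c + 1/z)\<close> has its points \<open>z \<noteq> 0\<close> over the finite
  points \<open>c + 1/z \<noteq> c\<close> of \<open>\<phi>\<close>, and \<open>z = 0\<close> over \<open>\<infinity>\<close>.\<close>

lemma wronskian_shift_inverse_root_free:
  assumes rep: "rf_rep \<phi> = (P, Q)" and d: "d = max (degree P) (degree Q)" "d \<noteq> 0"
    and crit: "\<And>x. critical_point \<phi> x \<Longrightarrow> x = Some c"
  shows "poly (wronskian (reversal d (pcompose P [:c, 1:]))
                         (reversal d (pcompose Q [:c, 1:]))) x \<noteq> 0"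
proof
  assume root: "poly (wronskian (reversal d (pcompose P [:c, 1:]))
                                (reversal d (pcompose Q [:c, 1:]))) x = 0"
  have dP: "degree P \<le> d" and dQ: "degree Q \<le> d" using d(1) by simp_all
  show False
  proof (cases "x = 0")
    case False
    have "poly (wronskian (pcompose P [:c, 1:]) (pcompose Q [:c, 1:])) (inverse x) = 0"
      using wronskian_reversal_root[OF False _ _ root] dP dQ by (simp add: degree_pcompose)
    then have "critical_point \<phi> (Some (c + inverse x))"
      using critical_point_if_wronskian_root[OF rep] by (simp add: poly_wronskian_pcompose_shift)
    then show False using crit False by fastforce
  next
    case True
    obtain m where m: "d = Suc m" using d(2) not0_implies_Suc by blast
    have "poly (wronskian (reversal d P) (reversal d Q)) 0 = 0"
      using root True poly_wronskian_reversal_shift_0[of P m Q c] dP dQ m by simp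
    then show False
      using critical_point_infinity_if_wronskian_reversal_root[OF rep d] crit by blast
  qed
qed

lemma root_free_wronskian_rep:
  fixes \<phi> :: "'a::field ratfun"
  assumes "{x. critical_point \<phi> x} = {c}"
  shows "\<exists>A B. B \<noteq> 0 \<and> (\<forall>x. poly (wronskian A B) x \<noteq> 0) \<and>
    rf_comp \<phi> (case c of None \<Rightarrow> rf_X | Some c' \<Rightarrow> rf_const c' + inverse rf_X) = Fract A B"
proof -
  obtain P Q where r: "rf_rep \<phi> = (P, Q)" "Q \<noteq> 0" "\<phi> = Fract P Q" by (rule rf_repE)
  have crit: "x = c" if "critical_point \<phi> x" for x
    using assms that by blast
  show ?thesis
  proof (cases c)
    case None
    then have "\<forall>x. poly (wronskian P Q) x \<noteq> 0"
      using critical_point_if_wronskian_root[OF r(1)] crit by blast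
    then show ?thesis using None r by (auto simp: rf_comp_rf_X)
  next
    case (Some c')
    define d where "d = max (degree P) (degree Q)"
    have W: "wronskian P Q \<noteq> 0"
      using critical_point_if_wronskian_root[OF r(1)] crit[of "Some 0"] crit[of "Some 1"] by force
    have "d \<noteq> 0"
    proof
      assume "d = 0"
      then obtain a b where "P = [:a:]" "Q = [:b:]"
        unfolding d_def by (metis degree_eq_zeroE max.bounded_iff le_zero_eq order_refl)
      then show False using W by (simp add: wronskian_def)
    qed
    moreover have "reversal d (pcompose Q [:c', 1:]) \<noteq> 0"
      using r(2) by (intro reversal_nonzero) (auto simp: d_def degree_pcompose pcompose_eq_0)
    ultimately show ?thesis
      using Some wronskian_shift_inverse_root_free[OF r(1) d_def] crit
        rf_comp_shift_inverse[OF r(1), of d c'] by (auto simp: d_def)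
  qed
qed

section \<open>Euclid's algorithm in characteristic \<open>p\<close>\<close>

lemma pcompose_monom_monom: "pcompose (monom (a::'a::field) j) (monom 1 p) = monom a (p * j)"
proof -
  have "pcompose ([:0, 1:] ^ j) r = r ^ j" for r :: "'a poly"
    by (induction j) (simp_all add: pcompose_mult pcompose_pCons pcompose_1)
  then have "pcompose (monom a j) (monom 1 p) = smult a (monom 1 p ^ j)"
    by (simp add: monom_altdef pcompose_smult)
  then show ?thesis by (simp add: monom_power smult_monom mult.commute)
qed

lemma pderiv_eq_0_imp_pcompose_monom:
  fixes f :: "'a::field poly"
  assumes "pderiv f = 0" "CHAR('a) > 0"
  shows "\<exists>q. f = pcompose q (monom 1 CHAR('a))"
proof -
  let ?p = "CHAR('a)"
  have cz: "coeff f n = 0" if "\<not> ?p dvd n" for n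
  proof -
    have "coeff (pderiv f) (n - 1) = of_nat n * coeff f n"
      using that by (cases n) (simp_all add: coeff_pderiv)
    moreover have "of_nat n \<noteq> (0::'a)" using that by (simp add: of_nat_eq_0_iff_char_dvd)
    ultimately show ?thesis using assms(1) by simp
  qed
  have coeff_sum: "coeff (\<Sum>j\<le>degree f. monom (coeff f (?p * j)) (?p * j)) n = coeff f n" for n
  proof (cases "?p dvd n")
    case True
    then obtain k where k: "n = ?p * k" by (auto elim: dvdE)
    have "k \<le> n" using k assms(2) by simp
    then have "degree f < n" if "\<not> k \<le> degree f" using that by linarith
    then show ?thesis using k assms(2) by (auto simp: coeff_sum coeff_monom coeff_eq_0)
  next
    case False
    then show ?thesis using cz[OF False] by (auto simp: coeff_sum coeff_monom intro!: sum.neutral)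
  qed
  have "pcompose (\<Sum>j\<le>degree f. monom (coeff f (?p * j)) j) (monom 1 ?p) = f"
    by (rule poly_eqI) (simp add: pcompose_sum pcompose_monom_monom coeff_sum)
  then show ?thesis by metis
qed

lemma pcompose_monom_plus_linear_if_pderiv_const:
  fixes A :: "'a::field poly"
  assumes "pderiv A = [:a:]" "CHAR('a) > 0"
  shows "\<exists>q. A = pcompose q (monom 1 CHAR('a)) + [:0, a:]"
proof -
  have "pderiv (A - [:0, a:]) = 0" using assms(1) by (simp add: pderiv_diff pderiv_pCons)
  then obtain q where "A - [:0, a:] = pcompose q (monom 1 CHAR('a))"
    using pderiv_eq_0_imp_pcompose_monom assms(2) by blast
  then show ?thesis by (metis diff_add_cancel)
qed

lemma wronskian_mult_add: "wronskian (f * B + r) B = pderiv f * B^2 + wronskian r B"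
  by (simp add: wronskian_def pderiv_mult pderiv_add algebra_simps power2_eq_square)

lemma wronskian_div_mod: "wronskian A B = pderiv (A div B) * B^2 + wronskian (A mod B) B"
  using wronskian_mult_add[of "A div B" B "A mod B"] by simp

lemma pderiv_div_eq_0_if_wronskian_small:
  assumes "degree (wronskian A B) < 2 * degree B"
  shows "pderiv (A div B) = 0"
proof (rule ccontr)
  assume nz: "pderiv (A div B) \<noteq> 0"
  have B0: "B \<noteq> 0" using assms by auto
  have "degree (wronskian (A mod B) B) < 2 * degree B"
  proof (cases "A mod B = 0")
    case True then show ?thesis using assms by (simp add: wronskian_def)
  next
    case False
    then have "degree (A mod B) < degree B" using degree_mod_less'[OF B0] by simp
    then show ?thesis unfolding wronskian_def
      using degree_mult_le[of "pderiv (A mod B)" B] degree_mult_le[of "A mod B" "pderiv B"]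
        degree_pderiv_le[of "A mod B"] degree_pderiv_le[of B]
      by (intro degree_diff_less) linarith+
  qed
  moreover have deg: "degree (pderiv (A div B) * B^2) = degree (pderiv (A div B)) + 2 * degree B"
    using nz B0 by (simp add: degree_mult_eq degree_power_eq)
  ultimately have "degree (wronskian A B) = degree (pderiv (A div B) * B^2)"
    unfolding wronskian_div_mod[of A B] by (intro degree_add_eq_left) simp
  then show False using assms deg by simp
qed

lemma Fract_eq_div_plus_inverse:
  assumes "B \<noteq> 0" "A mod B \<noteq> 0"
  shows "Fract A B = rf_of_poly (A div B) + inverse (Fract B (A mod B))"
  using assms by (simp add: rf_of_poly_def eq_fract algebra_simps)

lemma degree_div_pos:
  fixes A B :: "'a::field poly"
  assumes "B \<noteq> 0" "degree B < degree A"
  shows "0 < degree (A div B)"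
proof (rule ccontr)
  assume "\<not> 0 < degree (A div B)"
  moreover have "degree (A mod B) \<le> degree B"
    using degree_mod_less'[OF assms(1), of A] by (cases "A mod B = 0") auto
  ultimately have "degree (A div B * B + A mod B) \<le> degree B"
    using degree_mult_le[of "A div B" B] by (intro degree_add_le) simp_all
  then show False using assms(2) by simp
qed

definition pth_power_cf :: "nat \<Rightarrow> 'a::field poly list \<Rightarrow> 'a poly \<Rightarrow> 'a \<Rightarrow> 'a poly list" where
  "pth_power_cf p qs qn a =
    map (\<lambda>q. pcompose q (monom 1 p)) qs @ [pcompose qn (monom 1 p) + [:0, a:]]"

lemma contfrac_pth_power_cf_Cons:
  "contfrac (pth_power_cf p (q # qs) qn a) =
    rf_of_poly (pcompose q (monom 1 p)) + inverse (contfrac (pth_power_cf p qs qn a))"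
  by (cases qs) (simp_all add: pth_power_cf_def)

lemma cf_expansion_Cons:
  assumes "cf_expansion fs" "0 < degree (hd fs)"
  shows "cf_expansion (f # fs)"
  unfolding cf_expansion_def
proof (intro conjI ballI)
  fix i assume "i \<in> {1..<length (f # fs)}"
  then obtain j where j: "i = Suc j" "j < length fs" by (cases i) auto
  then show "0 < degree ((f # fs) ! i)"
    using assms by (cases j) (auto simp: cf_expansion_def hd_conv_nth)
qed simp

lemma pth_power_cf_of_constant_denominator:
  fixes A B :: "'a::field poly"
  assumes "CHAR('a) > 0" "degree B = 0" "B \<noteq> 0"
    and "degree (wronskian A B) = 0" "wronskian A B \<noteq> 0"
  shows "\<exists>qn a. a \<noteq> 0 \<and> Fract A B = contfrac (pth_power_cf CHAR('a) [] qn a) \<and>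
    degree (hd (pth_power_cf CHAR('a) [] qn a)) = degree A"
proof -
  obtain b where b: "B = [:b:]" "b \<noteq> 0" using assms(2,3) by (metis degree_eq_zeroE pCons_eq_0_iff)
  define A' where "A' = smult (inverse b) A"
  have W: "wronskian A B = smult b (pderiv A)" by (simp add: wronskian_def b(1))
  have A': "pderiv A' = smult (inverse b) (pderiv A)" by (simp add: A'_def pderiv_smult)
  have "degree (pderiv A') = 0" using assms(4) unfolding A' W by simp
  then obtain a where a: "pderiv A' = [:a:]" by (metis degree_eq_zeroE)
  have "a \<noteq> 0" using assms(5) a b(2) unfolding W by (auto simp: A')
  moreover obtain qn where "A' = pcompose qn (monom 1 CHAR('a)) + [:0, a:]"
    using pcompose_monom_plus_linear_if_pderiv_const[OF a assms(1)] by blast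
  then have "pth_power_cf CHAR('a) [] qn a = [A']" by (simp add: pth_power_cf_def)
  moreover have "Fract A B = Fract A' 1" using b by (simp add: eq_fract A'_def)
  ultimately show ?thesis using b by (intro exI[of _ qn] exI[of _ a]) (simp add: rf_of_poly_def A'_def)
qed

lemma pth_power_cf_exists:
  fixes A B :: "'a::alg_closed_field poly"
  assumes "CHAR('a) > 0" "B \<noteq> 0" "\<forall>x. poly (wronskian A B) x \<noteq> 0"
  shows "\<exists>qs qn a. a \<noteq> 0 \<and> cf_expansion (pth_power_cf CHAR('a) qs qn a) \<and>
    Fract A B = contfrac (pth_power_cf CHAR('a) qs qn a) \<and>
    (degree B < degree A \<longrightarrow> 0 < degree (hd (pth_power_cf CHAR('a) qs qn a)))"
  using assms(2,3)
proof (induction "degree B" arbitrary: A B rule: less_induct)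
  case less
  let ?p = "CHAR('a)"
  have W: "degree (wronskian A B) = 0" "wronskian A B \<noteq> 0"
    using alg_closed_imp_poly_has_root[of "wronskian A B"] less.prems(2) by fastforce+
  show ?case
  proof (cases "degree B = 0")
    case True
    obtain qn a where "a \<noteq> 0" "Fract A B = contfrac (pth_power_cf ?p [] qn a)"
        "degree (hd (pth_power_cf ?p [] qn a)) = degree A"
      using pth_power_cf_of_constant_denominator[OF assms(1) True less.prems(1) W] by blast
    moreover have "cf_expansion (pth_power_cf ?p [] qn a)"
      by (simp add: cf_expansion_def pth_power_cf_def)
    ultimately show ?thesis using True
      by (intro exI[of _ "[]"] exI[of _ qn] exI[of _ a]) simp
  next
    case False
    define f where "f = A div B"
    define r where "r = A mod B"
    have "pderiv f = 0"
      unfolding f_def using W False by (intro pderiv_div_eq_0_if_wronskian_small) simp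
    then obtain q where q: "f = pcompose q (monom 1 ?p)"
      using pderiv_eq_0_imp_pcompose_monom assms(1) by blast
    have Br: "wronskian B r = - wronskian A B"
      using wronskian_div_mod[of A B] wronskian_swap[of "A mod B" B] \<open>pderiv f = 0\<close>
      by (simp add: f_def r_def)
    then have Wr: "\<forall>x. poly (wronskian B r) x \<noteq> 0" using less.prems(2) by simp
    have r0: "r \<noteq> 0" using Br W(2) by (auto simp: wronskian_def)
    then have rB: "degree r < degree B"
      using degree_mod_less'[OF less.prems(1)] by (simp add: r_def)
    obtain qs qn a where IH: "a \<noteq> 0" "cf_expansion (pth_power_cf ?p qs qn a)"
        "Fract B r = contfrac (pth_power_cf ?p qs qn a)" "0 < degree (hd (pth_power_cf ?p qs qn a))"
      using less.hyps[OF rB r0 Wr] rB by blast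
    have "Fract A B = contfrac (pth_power_cf ?p (q # qs) qn a)"
      unfolding contfrac_pth_power_cf_Cons IH(3)[symmetric] q[symmetric] f_def r_def
      using less.prems(1) r0 unfolding r_def by (rule Fract_eq_div_plus_inverse)
    moreover have "cf_expansion (pth_power_cf ?p (q # qs) qn a)"
      using cf_expansion_Cons[OF IH(2,4)] by (simp add: pth_power_cf_def)
    moreover have "degree B < degree A \<longrightarrow> 0 < degree (hd (pth_power_cf ?p (q # qs) qn a))"
      using degree_div_pos[OF less.prems(1), of A] q by (simp add: pth_power_cf_def f_def)
    ultimately show ?thesis using IH(1) by blast
  qed
qed

theorem corollary1p2:
  fixes \<phi> :: "'a::alg_closed_field ratfun" and c :: "'a option" and p :: nat
  assumes "p = CHAR('a)" and "p > 0"
    and "{x. critical_point \<phi> x} = {c}"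
  shows "\<exists>(qs :: 'a poly list) (qn :: 'a poly) (a :: 'a). a \<noteq> 0 \<and>
    (let \<sigma> = (case c of None \<Rightarrow> rf_X | Some c' \<Rightarrow> rf_const c' + inverse rf_X);
         fs = map (\<lambda>q. pcompose q (monom 1 p)) qs @ [pcompose qn (monom 1 p) + [:0, a:]]
     in cf_expansion fs \<and> rf_comp \<phi> \<sigma> = contfrac fs)"
proof -
  obtain A B where AB: "B \<noteq> 0" "\<forall>x. poly (wronskian A B) x \<noteq> 0"
    "rf_comp \<phi> (case c of None \<Rightarrow> rf_X | Some c' \<Rightarrow> rf_const c' + inverse rf_X) = Fract A B"
    using root_free_wronskian_rep[OF assms(3)] by blast
  have "CHAR('a) > 0" using assms(1,2) by simp
  then obtain qs qn a where "a \<noteq> 0" "cf_expansion (pth_power_cf p qs qn a)"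
      "Fract A B = contfrac (pth_power_cf p qs qn a)"
    using pth_power_cf_exists[OF _ AB(1,2)] unfolding assms(1) by blast
  then show ?thesis using AB(3) unfolding Let_def pth_power_cf_def by auto
qed

end
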